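(* Let $n$ be a non-negative integer and let $a,b$ be integers with $\gcd(a,b)=1$, $b\neq 0$ and $b\neq\pm1$. Let $T_N(a,b)=\sum_{k=0}^{\lfloor N/2\rfloor}\binom{N}{k}\binom{N-k}{k}a^k b^{N-2k}$ (the generalized central trinomial coefficient, i.e. the coefficient of $x^N$ in $(x^2+bx+a)^N$). Then $$\omega_b\big(T_{2n}(a,b)\big)=\omega_b\Big(\binom{2n}{n}\Big),\qquad \omega_b\big(T_{2n+1}(a,b)\big)=1+\omega_b\Big((2n+1)\binom{2n}{n}\Big).$$
   Context: For an integer $x$ with $x\neq 0,\pm1$ and a nonzero integer $y$, $\omega_x(y)$ denotes the largest non-negative integer $e$ such that $x^e$ divides $y$. *)

theory Defs
  imports "HOL-Computational_Algebra.Computational_Algebra"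
begin

definition gen_trinomial :: "nat \<Rightarrow> int \<Rightarrow> int \<Rightarrow> int" where
  "gen_trinomial N a b =
     (\<Sum>k = 0..N div 2. int (N choose k) * int ((N - k) choose k) * a ^ k * b ^ (N - 2 * k))"

abbreviation omega :: "int \<Rightarrow> int \<Rightarrow> nat" where
  "omega x y \<equiv> multiplicity x y"

end

theory Submission
  imports Defs
begin

text \<open>
  Let m = N div 2 and write T_N(a,b) as the sum over k \<le> m of t_k = N!/(k!^2 (N-2k)!) a^k b^(N-2k).
  The top term is c a^m with c = b^(N mod 2) N!/(m!^2 (N mod 2)!); as a is coprime to b, it
  suffices that b^(e+1), e = omega_b(c), divides every other term. For k < m and j = m - k,
  multiplying t_k by the central coefficient D_j of N - 2k gives c (m choose k)^2 a^k b^(2j).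
  No prime power p^(2j) divides D_j, which is (2j choose j) or (2j+1) (2j choose j) (by size, and
  by oddness of 2j+1 when p = 2), so for every prime p of b the cofactor D_j absorbs fewer than
  2j of the at least 2j extra factors p contributed by b^(2j).
\<close>

definition trinomial :: "nat \<Rightarrow> nat \<Rightarrow> nat" where
  "trinomial N k = (N choose k) * ((N - k) choose k)"

lemma trinomial_fact:
  assumes "2 * k \<le> N"
  shows "trinomial N k * (fact k * fact k * fact (N - 2 * k)) = fact N"
proof -
  have "fact k * fact (N - k) * (N choose k) = fact N"
    using assms by (intro binomial_fact_lemma) simp
  moreover have "fact k * fact (N - k - k) * ((N - k) choose k) = fact (N - k)"
    using assms by (intro binomial_fact_lemma) simp
  moreover have "N - k - k = N - 2 * k" by simp
  ultimately show ?thesis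
    unfolding trinomial_def by (metis mult.commute mult.left_commute)
qed

lemma trinomial_pos: "2 * k \<le> N \<Longrightarrow> 0 < trinomial N k"
  by (simp add: trinomial_def)

lemma trinomial_mult_trinomial:
  assumes "2 * (k + j) \<le> N"
  shows "trinomial N k * trinomial (N - 2 * k) j = trinomial N (k + j) * ((k + j) choose k) ^ 2"
proof -
  define F :: nat where "F = fact k * fact k * fact j * fact j * fact (N - 2 * (k + j))"
  have rest: "N - 2 * k - 2 * j = N - 2 * (k + j)" by simp
  have "trinomial N k * trinomial (N - 2 * k) j * F
      = trinomial N k * (fact k * fact k)
        * (trinomial (N - 2 * k) j * (fact j * fact j * fact (N - 2 * k - 2 * j)))"
    unfolding F_def rest by (simp only: mult_ac)
  also have "\<dots> = trinomial N k * (fact k * fact k * fact (N - 2 * k))"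
    using assms trinomial_fact[of j "N - 2 * k"] by simp
  also have "\<dots> = fact N"
    using assms by (simp add: trinomial_fact)
  also have "\<dots> = trinomial N (k + j) * (fact (k + j) * fact (k + j) * fact (N - 2 * (k + j)))"
    using trinomial_fact[OF assms] by simp
  also have "fact (k + j) = fact k * fact j * ((k + j) choose k)"
    using binomial_fact_lemma[of k "k + j"] by simp
  also have "trinomial N (k + j) * (fact k * fact j * ((k + j) choose k)
      * (fact k * fact j * ((k + j) choose k)) * fact (N - 2 * (k + j)))
      = trinomial N (k + j) * ((k + j) choose k) ^ 2 * F"
    unfolding F_def power2_eq_square by (simp only: mult_ac)
  finally show ?thesis
    unfolding F_def by simp
qed

lemma trinomial_double: "trinomial (2 * n) n = (2 * n) choose n"
  by (simp add: trinomial_def)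

lemma trinomial_double_Suc: "trinomial (2 * n + 1) n = (2 * n + 1) * ((2 * n) choose n)"
proof -
  have "(2 * n + 1) * ((2 * n) choose n) = (2 * n + 1 choose n + 1) * (n + 1)"
    using Suc_times_binomial_eq[of "2 * n" n] by simp
  also have "(2 * n + 1 choose n + 1) = (2 * n + 1 choose n)"
    using binomial_symmetric[of n "2 * n + 1"] by simp
  finally show ?thesis
    by (simp add: trinomial_def)
qed

lemma central_binomial_less_four_power:
  assumes "j \<ge> 1"
  shows "(2 * j choose j) < 4 ^ j"
proof -
  have "(2 * j choose j) + (2 * j choose 0) = (\<Sum>k\<in>{0, j}. 2 * j choose k)"
    using assms by simp
  also have "\<dots> \<le> (\<Sum>k\<le>2 * j. 2 * j choose k)"
    by (rule sum_mono2) auto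
  also have "\<dots> = 4 ^ j"
    by (simp add: choose_row_sum power_mult)
  finally show ?thesis by simp
qed

lemma odd_times_four_power_le_nine_power:
  assumes "j \<ge> 2"
  shows "(2 * j + 1) * 4 ^ j \<le> (9::nat) ^ j"
  using assms
proof (induction j rule: dec_induct)
  case base
  then show ?case by simp
next
  case (step m)
  have "(2 * Suc m + 1) * 4 ^ Suc m \<le> 9 * ((2 * m + 1) * 4 ^ m)"
    using \<open>2 \<le> m\<close> by simp
  also have "\<dots> \<le> 9 * 9 ^ m"
    using step.IH by simp
  finally show ?case by simp
qed

lemma odd_times_central_binomial_less_nine_power:
  assumes "j \<ge> 1"
  shows "(2 * j + 1) * (2 * j choose j) < 9 ^ j"
proof (cases "j = 1")
  case True
  then show ?thesis by (simp add: numeral_2_eq_2)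
next
  case False
  have "(2 * j + 1) * (2 * j choose j) < (2 * j + 1) * 4 ^ j"
    using central_binomial_less_four_power[OF assms] by (intro mult_strict_left_mono) auto
  also have "\<dots> \<le> 9 ^ j"
    using False assms by (intro odd_times_four_power_le_nine_power) simp
  finally show ?thesis .
qed

lemma power_not_dvd_if_less_power:
  fixes p q x :: int
  assumes "0 < x" "x < q ^ k" "0 \<le> q" "q \<le> p"
  shows "\<not> p ^ k dvd x"
proof
  assume "p ^ k dvd x"
  then have "p ^ k \<le> x"
    using assms(1) by (rule zdvd_imp_le)
  moreover have "q ^ k \<le> p ^ k"
    using assms(4,3) by (rule power_mono)
  ultimately show False
    using assms(2) by simp
qed

lemma prime_power_not_dvd_central_binomial:
  fixes p :: int
  assumes "prime p" "j \<ge> 1"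
  shows "\<not> p ^ (2 * j) dvd int (2 * j choose j)"
proof (rule power_not_dvd_if_less_power)
  have "2 * j choose j < 4 ^ j"
    using assms(2) by (rule central_binomial_less_four_power)
  then show "int (2 * j choose j) < 2 ^ (2 * j)"
    by (simp add: power_mult flip: of_nat_less_iff)
  show "2 \<le> p"
    using assms(1) by (rule prime_ge_2_int)
qed simp_all

lemma prime_power_not_dvd_odd_times_central_binomial:
  fixes p :: int
  assumes "prime p" "j \<ge> 1"
  shows "\<not> p ^ (2 * j) dvd int ((2 * j + 1) * (2 * j choose j))"
proof (cases "p = 2")
  case True
  have "coprime ((2::int) ^ (2 * j)) (int (2 * j + 1))"
    by simp
  then show ?thesis
    using True prime_power_not_dvd_central_binomial[OF assms]
    by (metis coprime_dvd_mult_right_iff of_nat_mult)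
next
  case False
  show ?thesis
  proof (rule power_not_dvd_if_less_power)
    have "(2 * j + 1) * (2 * j choose j) < 9 ^ j"
      using assms(2) by (rule odd_times_central_binomial_less_nine_power)
    then have "int ((2 * j + 1) * (2 * j choose j)) < 9 ^ j"
      by (metis of_nat_less_iff of_nat_numeral of_nat_power)
    then show "int ((2 * j + 1) * (2 * j choose j)) < 3 ^ (2 * j)"
      by (simp add: power_mult)
    show "3 \<le> p"
      using False prime_ge_2_int[OF assms(1)] by simp
    show "0 < int ((2 * j + 1) * (2 * j choose j))"
      unfolding of_nat_0_less_iff by simp
  qed simp
qed

lemma prime_power_not_dvd_central_trinomial:
  fixes p :: int
  assumes "prime p" "N div 2 \<ge> 1"
  shows "\<not> p ^ (2 * (N div 2)) dvd int (trinomial N (N div 2))"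
proof (cases "even N")
  case True
  then have "N = 2 * (N div 2)" by simp
  then show ?thesis
    using prime_power_not_dvd_central_binomial[OF assms] by (metis trinomial_double)
next
  case False
  then have "N = 2 * (N div 2) + 1" by simp
  then show ?thesis
    using prime_power_not_dvd_odd_times_central_binomial[OF assms]
    by (metis trinomial_double_Suc)
qed

lemma power_Suc_dvd_if_small_cofactor:
  fixes b M D X :: "'a :: factorial_semiring"
  assumes eq: "M * D = b ^ (e + s) * X" and "D \<noteq> 0" "b \<noteq> 0" "s \<ge> 1"
    and small: "\<And>p. prime p \<Longrightarrow> p dvd b \<Longrightarrow> \<not> p ^ s dvd D"
  shows "b ^ Suc e dvd M"
proof (cases "M = 0")
  case True
  then show ?thesis by simp
next
  case False
  have "X \<noteq> 0"
    using eq False \<open>D \<noteq> 0\<close> \<open>b \<noteq> 0\<close> by auto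
  show ?thesis
  proof (rule multiplicity_le_imp_dvd)
    show "b ^ Suc e \<noteq> 0"
      using \<open>b \<noteq> 0\<close> by simp
    fix p :: 'a
    assume p: "prime p"
    then have pe: "prime_elem p" and p_not_unit: "\<not> is_unit p"
      by auto
    define v where "v = multiplicity p b"
    have power: "multiplicity p (b ^ k) = k * v" for k
      unfolding v_def using pe \<open>b \<noteq> 0\<close> by (rule prime_elem_multiplicity_power_distrib)
    show "multiplicity p (b ^ Suc e) \<le> multiplicity p M"
    proof (cases "p dvd b")
      case False
      then have "v = 0"
        unfolding v_def by (rule not_dvd_imp_multiplicity_0)
      then show ?thesis
        using power[of "Suc e"] by (simp del: power_Suc)
    next
      case True
      have "v \<ge> 1"
        unfolding v_def using True \<open>b \<noteq> 0\<close> p_not_unit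
        by (simp add: multiplicity_geI)
      have "multiplicity p D < s"
        using small[OF p True] \<open>D \<noteq> 0\<close> p_not_unit by (simp add: multiplicity_lessI)
      moreover have "multiplicity p M + multiplicity p D = (e + s) * v + multiplicity p X"
        using arg_cong[OF eq, of "multiplicity p"] pe False \<open>D \<noteq> 0\<close> \<open>b \<noteq> 0\<close> \<open>X \<noteq> 0\<close>
        by (simp add: prime_elem_multiplicity_mult_distrib power)
      moreover have "(e + s) * v = Suc e * v + (s - 1) * v"
        using \<open>s \<ge> 1\<close> add_mult_distrib[of "Suc e" "s - 1" v] by simp
      moreover have "s - 1 \<le> (s - 1) * v"
        using \<open>v \<ge> 1\<close> by simp
      ultimately show ?thesis
        using power[of "Suc e"] by linarith
    qed
  qed
qed

lemma multiplicity_mult_add_eq: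
  fixes b c u S :: "'a :: factorial_ring_gcd"
  assumes "c \<noteq> 0" "\<not> is_unit b" "coprime b u"
    and "b ^ Suc (multiplicity b c) dvd S"
  shows "multiplicity b (c * u + S) = multiplicity b c"
proof (rule multiplicity_eqI)
  let ?e = "multiplicity b c"
  have "b ^ ?e dvd S"
    using assms(4) by (rule power_le_dvd) simp
  then show "b ^ ?e dvd c * u + S"
    by (simp add: multiplicity_dvd)
  show "\<not> b ^ Suc ?e dvd c * u + S"
  proof
    assume "b ^ Suc ?e dvd c * u + S"
    then have "b ^ Suc ?e dvd c * u"
      using assms(4) by (simp add: dvd_add_left_iff)
    then have "b ^ Suc ?e dvd c"
      using assms(3) by (simp add: coprime_dvd_mult_left_iff)
    then have "Suc ?e \<le> ?e"
      by (simp only: power_dvd_iff_le_multiplicity[OF assms(1,2)])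
    then show False
      by simp
  qed
qed

lemma multiplicity_gen_trinomial:
  fixes a b :: int
  assumes "coprime a b" "b \<noteq> 0" "\<not> is_unit b"
  shows "multiplicity b (gen_trinomial N a b)
           = multiplicity b (b ^ (N mod 2) * int (trinomial N (N div 2)))"
proof -
  define m where "m = N div 2"
  define c where "c = b ^ (N mod 2) * int (trinomial N m)"
  define t where "t k = int (trinomial N k) * a ^ k * b ^ (N - 2 * k)" for k
  have c_nonzero: "c \<noteq> 0"
    unfolding c_def m_def using assms(2) trinomial_pos[of "N div 2" N] by simp
  have "gen_trinomial N a b = (\<Sum>k\<in>insert m {..<m}. t k)"
    unfolding gen_trinomial_def t_def trinomial_def m_def
    by (intro sum.cong) (auto simp: of_nat_mult)
  also have "\<dots> = c * a ^ m + (\<Sum>k<m. t k)"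
    by (simp add: t_def c_def m_def minus_mult_div_eq_mod)
  finally have split: "gen_trinomial N a b = c * a ^ m + (\<Sum>k<m. t k)" .
  obtain c' where c': "c = b ^ multiplicity b c * c'"
    using multiplicity_dvd by (metis dvdE)
  have "b ^ Suc (multiplicity b c) dvd t k" if "k < m" for k
  proof -
    define j where "j = m - k"
    have j: "2 * (k + j) \<le> N" "N - 2 * k = 2 * j + N mod 2" "(N - 2 * k) div 2 = j" "j \<ge> 1"
      using that unfolding j_def m_def by presburger+
    have "trinomial N k * trinomial (N - 2 * k) j = trinomial N m * (m choose k) ^ 2"
      using trinomial_mult_trinomial[OF j(1)] that unfolding j_def by simp
    then have "t k * int (trinomial (N - 2 * k) j)
        = c * b ^ (2 * j) * (int (m choose k) ^ 2 * a ^ k)"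
      unfolding t_def c_def j(2) power_add
      by (simp add: algebra_simps flip: of_nat_mult of_nat_power)
    then have eq: "t k * int (trinomial (N - 2 * k) j)
        = b ^ (multiplicity b c + 2 * j) * (c' * int (m choose k) ^ 2 * a ^ k)"
      by (subst (asm) c') (simp add: power_add algebra_simps)
    have "int (trinomial (N - 2 * k) j) \<noteq> 0"
      using trinomial_pos[of j "N - 2 * k"] j by simp
    moreover have "\<not> p ^ (2 * j) dvd int (trinomial (N - 2 * k) j)" if "prime p" for p
      using prime_power_not_dvd_central_trinomial[OF that, of "N - 2 * k"] j by simp
    ultimately show ?thesis
      using power_Suc_dvd_if_small_cofactor[OF eq] assms(2) j(4) by simp
  qed
  then have "b ^ Suc (multiplicity b c) dvd (\<Sum>k<m. t k)"
    by (auto intro!: dvd_sum)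
  moreover have "coprime b (a ^ m)"
    using assms(1) by (simp add: coprime_commute)
  ultimately have "multiplicity b (c * a ^ m + (\<Sum>k<m. t k)) = multiplicity b c"
    using c_nonzero assms(3) by (intro multiplicity_mult_add_eq)
  then show ?thesis
    unfolding split by (simp add: c_def m_def)
qed

theorem theorem8:
  fixes n :: nat and a b :: int
  assumes "gcd a b = 1" and "b \<noteq> 0" and "b \<noteq> 1" and "b \<noteq> -1"
  shows "omega b (gen_trinomial (2 * n) a b) = omega b (int ((2 * n) choose n)) \<and>
         omega b (gen_trinomial (2 * n + 1) a b) = 1 + omega b (int (2 * n + 1) * int ((2 * n) choose n))"
proof
  have coprime: "coprime a b"
    using assms(1) by (rule gcd_eq_1_imp_coprime)
  have not_unit: "\<not> is_unit b"
    using assms(3,4) by simp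
  show "omega b (gen_trinomial (2 * n) a b) = omega b (int ((2 * n) choose n))"
    using multiplicity_gen_trinomial[OF coprime assms(2) not_unit, of "2 * n"]
    by (simp add: trinomial_double)
  have "(2 * n + 1) div 2 = n" "(2 * n + 1) mod 2 = 1"
    by simp_all
  then have "omega b (gen_trinomial (2 * n + 1) a b)
      = omega b (b * int ((2 * n + 1) * ((2 * n) choose n)))"
    using multiplicity_gen_trinomial[OF coprime assms(2) not_unit, of "2 * n + 1"]
    by (simp only: trinomial_double_Suc power_one_right)
  then show "omega b (gen_trinomial (2 * n + 1) a b) = 1 + omega b (int (2 * n + 1) * int ((2 * n) choose n))"
    using multiplicity_times_same[where p = b] not_unit assms(2) by (simp only: of_nat_mult) simp
qed

end
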